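(* The map $G$ is regular on $(\mathcal{X},d)$: its set of periodic points (points $x$ with $G^n(x)=x$ for some $n\ge1$) is dense in $\mathcal{X}$.
   Context: Fix an integer $\mathsf{N}\ge 1$ and write $\llbracket a;b\rrbracket=\{a,a+1,\dots,b\}$. Let $f:\mathbb{Z}/4\mathbb{Z}\to\mathbb{Z}/4\mathbb{Z}$, $f(x)=x+1 \pmod 4$, with $f^{-1}(x)=x-1\pmod 4$ and $f^0=\mathrm{id}$. Let $\mathrm{sign}(x)=1$ if $x>0$, $0$ if $x=0$, $-1$ if $x<0$. For $k\in\llbracket -\mathsf{N};\mathsf{N}\rrbracket$ define $f_k:(\mathbb{Z}/4\mathbb{Z})^{\mathsf{N}}\to(\mathbb{Z}/4\mathbb{Z})^{\mathsf{N}}$ by $f_k(C_1,\dots,C_{\mathsf{N}})=(C_1,\dots,C_{|k|-1},f^{\mathrm{sign}(k)}(C_{|k|}),\dots,f^{\mathrm{sign}(k)}(C_{\mathsf{N}}))$ (so $f_0$ is the identity). Folding sequences are $F=(F^j)_{j\in\mathbb{N}}\in\llbracket -\mathsf{N};\mathsf{N}\rrbracket^{\mathbb{N}}$; let $i(F)=F^0$ and let $\sigma$ be the shift, $\sigma((F^j)_{j})=(F^{j+1})_{j}$. A finite sequence $(k_1,\dots,k_n)$ is identified with $(k_1,\dots,k_n,0,0,\dots)$. On $\check{\mathcal{X}}=(\mathbb{Z}/4\mathbb{Z})^{\mathsf{N}}\times\llbracket -\mathsf{N};\mathsf{N}\rrbracket^{\mathbb{N}}$ define $G((C,F))=(f_{i(F)}(C),\sigma(F))$.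 SAW requirement: for $C\in(\mathbb{Z}/4\mathbb{Z})^{\mathsf{N}}$ let $p(C)=(X_0,\dots,X_{\mathsf{N}})\in(\mathbb{Z}^2)^{\mathsf{N}+1}$ with $X_0=(0,0)$ and $X_i=X_{i-1}+v(C_i)$, where $v(0)=(1,0)$, $v(1)=(0,-1)$, $v(2)=(-1,0)$, $v(3)=(0,1)$. $C$ satisfies the SAW requirement iff the points $X_0,\dots,X_{\mathsf{N}}$ are pairwise distinct. Let $\mathfrak{C}_{\mathsf{N}}$ be the set of $C\in(\mathbb{Z}/4\mathbb{Z})^{\mathsf{N}}$ for which there exist $n\ge1$ and $k_1,\dots,k_n\in\llbracket -\mathsf{N};\mathsf{N}\rrbracket$ such that $C$ is the first component of $G^n(((0,\dots,0),(k_1,\dots,k_n)))$ and, for every $i\le n$, the first component of $G^i(((0,\dots,0),(k_1,\dots,k_n)))$ satisfies the SAW requirement. Let $\mathcal{X}=\mathfrak{C}_{\mathsf{N}}\times\llbracket -\mathsf{N};\mathsf{N}\rrbracket^{\mathbb{N}}$ with metric $d((C,F),(\check C,\check F))=d_C(C,\check C)+d_F(F,\check F)$, where $d_C(C,\check C)=\sum_{k=1}^{\mathsf{N}}\delta(C_k,\check C_k)2^{\mathsf{N}-k}$ ($\delta(a,b)=0$ if $a=b$, $1$ otherwise) and $d_F(F,\check F)=\frac{9}{2\mathsf{N}}\sum_{k=0}^{\infty}\frac{|F^k-\check F^k|}{10^{k+1}}$. The paper regards $G$ as a self-map of $\mathcal{X}$. *)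

theory Defs
  imports "HOL-Analysis.Analysis" "HOL-Library.Numeral_Type"
begin

text \<open>Configurations: lists over Z/4Z (type 4) of length N; entry C!(j-1) is C_j.
  Folding sequences: functions nat => int (values in [-N,N] inside the space).\<close>

definition fmap :: "int \<Rightarrow> 4 list \<Rightarrow> 4 list" where
  "fmap k C = [ (if int i + 1 \<ge> \<bar>k\<bar> then C ! i + of_int (sgn k) else C ! i). i \<leftarrow> [0..<length C]]"

definition Gmap :: "4 list \<times> (nat \<Rightarrow> int) \<Rightarrow> 4 list \<times> (nat \<Rightarrow> int)" where
  "Gmap x = (fmap (snd x 0) (fst x), (\<lambda>j. snd x (Suc j)))"

definition vstep :: "4 \<Rightarrow> int \<times> int" where
  "vstep c = (if c = 0 then (1, 0) else if c = 1 then (0, -1) else if c = 2 then (-1, 0) else (0, 1))"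

definition pathpt :: "4 list \<Rightarrow> nat \<Rightarrow> int \<times> int" where
  "pathpt C i = ((\<Sum>j<i. fst (vstep (C ! j))), (\<Sum>j<i. snd (vstep (C ! j))))"

definition SAW :: "4 list \<Rightarrow> bool" where
  "SAW C \<longleftrightarrow> inj_on (pathpt C) {0..length C}"

definition finseq :: "int list \<Rightarrow> nat \<Rightarrow> int" where
  "finseq ks j = (if j < length ks then ks ! j else 0)"

definition confs :: "nat \<Rightarrow> 4 list set" where
  "confs N = {C. \<exists>ks. length ks \<ge> 1 \<and> set ks \<subseteq> {- int N..int N} \<and>
      C = fst ((Gmap ^^ length ks) (replicate N 0, finseq ks)) \<and>
      (\<forall>i\<le>length ks. SAW (fst ((Gmap ^^ i) (replicate N 0, finseq ks))))}"

definition Xspace :: "nat \<Rightarrow> (4 list \<times> (nat \<Rightarrow> int)) set" where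
  "Xspace N = {(C, F). C \<in> confs N \<and> (\<forall>j. F j \<in> {- int N..int N})}"

definition dC :: "nat \<Rightarrow> 4 list \<Rightarrow> 4 list \<Rightarrow> real" where
  "dC N C C' = (\<Sum>k=1..N. (if C ! (k - 1) = C' ! (k - 1) then 0 else 1) * 2 ^ (N - k))"

definition dF :: "nat \<Rightarrow> (nat \<Rightarrow> int) \<Rightarrow> (nat \<Rightarrow> int) \<Rightarrow> real" where
  "dF N F F' = 9 / (2 * real N) * (\<Sum>k. real_of_int \<bar>F k - F' k\<bar> / 10 ^ (k + 1))"

definition dX :: "nat \<Rightarrow> 4 list \<times> (nat \<Rightarrow> int) \<Rightarrow> 4 list \<times> (nat \<Rightarrow> int) \<Rightarrow> real" where
  "dX N x y = dC N (fst x) (fst y) + dF N (snd x) (snd y)"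

end

theory Submission
  imports Defs
begin

text \<open>A point \<open>(C, F)\<close> is approximated by \<open>(C, F')\<close>, where \<open>F'\<close> performs the first \<open>m\<close> folds
  of \<open>F\<close> and then undoes them in reverse order, forever. Since \<open>f\<^sub>-\<^sub>k\<close> inverts \<open>f\<^sub>k\<close>,
  \<open>G\<^sup>2\<^sup>m\<close> fixes \<open>(C, F')\<close>, and \<open>(C, F')\<close> lies in the space because \<open>C\<close> is kept. As \<open>F'\<close> agrees with \<open>F\<close> on the
  first \<open>m\<close> entries and both take values in \<open>[-N, N]\<close>, \<open>d(F, F') \<le> 10\<^sup>-\<^sup>m\<close>.\<close>

lemma length_fmap [simp]: "length (fmap k C) = length C"
  by (simp add: fmap_def)

lemma fmap_uminus_fmap [simp]: "fmap (- k) (fmap k C) = C"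
  by (rule nth_equalityI) (auto simp: fmap_def sgn_minus)

fun fold_conf :: "(nat \<Rightarrow> int) \<Rightarrow> nat \<Rightarrow> 4 list \<Rightarrow> 4 list" where
  "fold_conf F 0 C = C"
| "fold_conf F (Suc n) C = fmap (F n) (fold_conf F n C)"

lemma Gmap_funpow: "(Gmap ^^ n) (C, F) = (fold_conf F n C, \<lambda>j. F (j + n))"
  by (induction n) (auto simp: Gmap_def)

definition retrace_cycle :: "(nat \<Rightarrow> int) \<Rightarrow> nat \<Rightarrow> nat \<Rightarrow> int" where
  "retrace_cycle F m j =
     (let r = j mod (2 * m) in if r < m then F r else - F (2 * m - 1 - r))"

lemma retrace_cycle_initial: "i < m \<Longrightarrow> retrace_cycle F m i = F i"
  by (simp add: retrace_cycle_def)

lemma retrace_cycle_reflect: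
  "i < m \<Longrightarrow> retrace_cycle F m (m + i) = - retrace_cycle F m (m - Suc i)"
  by (simp add: retrace_cycle_def)

lemma retrace_cycle_periodic: "retrace_cycle F m (j + 2 * m) = retrace_cycle F m j"
  by (simp add: retrace_cycle_def)

lemma retrace_cycle_range:
  assumes "\<forall>j. F j \<in> {- int N..int N}"
  shows "retrace_cycle F m j \<in> {- int N..int N}"
  using assms[rule_format, of "j mod (2 * m)"] assms[rule_format, of "2 * m - 1 - j mod (2 * m)"]
  by (auto simp: retrace_cycle_def Let_def)

lemma fold_conf_retrace_cycle:
  assumes "i \<le> m"
  shows "fold_conf (retrace_cycle F m) (m + i) C = fold_conf (retrace_cycle F m) (m - i) C"
  using assms
proof (induction i)
  case 0
  then show ?case by simp
next
  case (Suc i)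
  let ?F = "retrace_cycle F m" and ?j = "m - Suc i"
  have j: "m - i = Suc ?j"
    using Suc.prems by simp
  have "fold_conf ?F (m + Suc i) C = fmap (- ?F ?j) (fold_conf ?F (m - i) C)"
    using Suc by (simp add: retrace_cycle_reflect)
  also have "\<dots> = fold_conf ?F ?j C"
    by (simp only: j fold_conf.simps fmap_uminus_fmap)
  finally show ?case .
qed

lemma fold_conf_retrace_cycle_period: "fold_conf (retrace_cycle F m) (2 * m) C = C"
  using fold_conf_retrace_cycle[of m m F C] by (simp add: mult_2)

lemma Gmap_funpow_retrace_cycle:
  "(Gmap ^^ (2 * m)) (C, retrace_cycle F m) = (C, retrace_cycle F m)"
  by (simp add: Gmap_funpow fold_conf_retrace_cycle_period retrace_cycle_periodic)

lemma dF_le_if_agree_below: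
  assumes N: "N \<ge> 1"
    and range: "\<And>k. \<bar>F k\<bar> \<le> int N" "\<And>k. \<bar>F' k\<bar> \<le> int N"
    and agree: "\<And>k. k < m \<Longrightarrow> F k = F' k"
  shows "dF N F F' \<le> 1 / 10 ^ m"
proof -
  define t where "t k = real_of_int \<bar>F k - F' k\<bar> / 10 ^ (k + 1)" for k
  define g where "g k = 2 * real N * (1 / 10) ^ (k + 1)" for k :: nat
  have t_le_g: "t k \<le> g k" for k
  proof -
    have "real_of_int \<bar>F k - F' k\<bar> \<le> 2 * real N"
      using range[of k] by linarith
    then have "t k \<le> 2 * real N / 10 ^ (k + 1)"
      unfolding t_def by (intro divide_right_mono) auto
    then show ?thesis
      by (simp add: g_def power_one_over)
  qed
  have g_sums: "(\<lambda>i. g (i + m)) sums (2 * real N / (9 * 10 ^ m))"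
  proof -
    have "(\<lambda>i. 2 * real N * (1 / 10) ^ (m + 1) * (1 / 10) ^ i)
            sums (2 * real N * (1 / 10) ^ (m + 1) * (1 / (1 - 1 / 10)))"
      by (intro sums_mult geometric_sums) simp
    then show ?thesis
      by (simp add: g_def power_add field_simps)
  qed
  have "summable g"
    using sums_summable[OF g_sums] by (simp add: summable_iff_shift)
  then have "summable t"
    by (rule summable_comparison_test[rotated]) (use t_le_g in \<open>auto simp: t_def\<close>)
  then have "suminf t = (\<Sum>i<m. t i) + (\<Sum>i. t (i + m))"
    using suminf_split_initial_segment[of t m] by simp
  also have "(\<Sum>i<m. t i) = 0"
    by (simp add: t_def agree)
  also have "(\<Sum>i. t (i + m)) \<le> 2 * real N / (9 * 10 ^ m)"
  proof (rule sums_le[OF _ _ g_sums])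
    show "(\<lambda>i. t (i + m)) sums (\<Sum>i. t (i + m))"
      using \<open>summable t\<close> summable_iff_shift[of t m] by (simp add: summable_sums)
  qed (rule t_le_g)
  finally have "suminf t \<le> 2 * real N / (9 * 10 ^ m)"
    by simp
  have "dF N F F' = 9 / (2 * real N) * suminf t"
    unfolding dF_def t_def[abs_def] ..
  also have "\<dots> \<le> 9 / (2 * real N) * (2 * real N / (9 * 10 ^ m))"
    using \<open>suminf t \<le> _\<close> by (intro mult_left_mono) auto
  also have "\<dots> = 1 / 10 ^ m"
    using N by simp
  finally show ?thesis .
qed

theorem mainTheorem3:
  fixes N :: nat
  assumes "N \<ge> 1"
  shows "\<forall>x\<in>Xspace N. \<forall>\<epsilon>>0. \<exists>y\<in>Xspace N.
           (\<exists>n\<ge>1. (Gmap ^^ n) y = y) \<and> dX N x y < \<epsilon>"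
proof (intro ballI allI impI)
  fix x \<epsilon>
  assume "x \<in> Xspace N" and "\<epsilon> > (0::real)"
  then obtain C F where x: "x = (C, F)" and C: "C \<in> confs N"
    and range: "\<forall>j. F j \<in> {- int N..int N}"
    by (auto simp: Xspace_def)
  obtain n where n: "(1 / 10 :: real) ^ n < \<epsilon>"
    using real_arch_pow_inv[OF \<open>\<epsilon> > 0\<close>, of "1 / 10"] by auto
  define m where "m = Suc n"
  have "1 / (10::real) ^ m \<le> (1 / 10) ^ n"
    by (simp add: m_def power_one_over frac_le)
  with n have m: "1 / (10::real) ^ m < \<epsilon>"
    by simp
  have bounds: "\<bar>F k\<bar> \<le> int N" "\<bar>retrace_cycle F m k\<bar> \<le> int N" for k
    using range[rule_format, of k] retrace_cycle_range[OF range, of m k] by auto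
  have "dF N F (retrace_cycle F m) \<le> 1 / 10 ^ m"
    using bounds by (intro dF_le_if_agree_below[OF assms]) (simp_all add: retrace_cycle_initial)
  define y where "y = (C, retrace_cycle F m)"
  have "y \<in> Xspace N"
    using C retrace_cycle_range[OF range] by (simp add: y_def Xspace_def)
  moreover have "(Gmap ^^ (2 * m)) y = y"
    unfolding y_def by (rule Gmap_funpow_retrace_cycle)
  moreover have "dX N x y < \<epsilon>"
    using \<open>dF N F _ \<le> _\<close> m by (simp add: dX_def dC_def x y_def)
  moreover have "2 * m \<ge> 1"
    by (simp add: m_def)
  ultimately show "\<exists>y\<in>Xspace N. (\<exists>n\<ge>1. (Gmap ^^ n) y = y) \<and> dX N x y < \<epsilon>"
    by blast
qed

end
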